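(* Let $\{x_n\}$ be a statistically convergent sequence in an $S$-metric space $(X,S)$. Then there is a convergent sequence $\{y_n\}$ in $X$ such that $x_n=y_n$ for almost all $n\in\mathbb N$, i.e. $\delta(\{n\in\mathbb N: x_n\ne y_n\})=0$.
   Context: An $S$-metric on a nonempty set $X$ is a function $S:X^3\to[0,\infty)$ such that for all $x,y,z,a\in X$: $S(x,y,z)=0$ if and only if $x=y=z$, and $S(x,y,z)\le S(x,x,a)+S(y,y,a)+S(z,z,a)$. A sequence $\{y_n\}$ converges to $y$ if for every $\varepsilon>0$ there is $k$ with $S(y_n,y_n,y)<\varepsilon$ for all $n\ge k$. For $B\subset\mathbb N$ the natural density is $\delta(B)=\lim_{n\to\infty}\frac{|\{k\in B:k\le n\}|}{n}$ when the limit exists. A sequence $\{x_n\}$ is statistically convergent to $x\in X$ if for every $\varepsilon>0$, $\delta(\{n\in\mathbb N: S(x_n,x_n,x)\ge\varepsilon\})=0$. *)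

theory Defs
  imports "HOL-Analysis.Analysis"
begin

definition S_metric :: "('a \<Rightarrow> 'a \<Rightarrow> 'a \<Rightarrow> real) \<Rightarrow> bool" where
  "S_metric S \<longleftrightarrow>
     (\<forall>x y z. S x y z \<ge> 0) \<and>
     (\<forall>x y z. S x y z = 0 \<longleftrightarrow> x = y \<and> y = z) \<and>
     (\<forall>x y z a. S x y z \<le> S x x a + S y y a + S z z a)"

definition S_converges :: "('a \<Rightarrow> 'a \<Rightarrow> 'a \<Rightarrow> real) \<Rightarrow> (nat \<Rightarrow> 'a) \<Rightarrow> 'a \<Rightarrow> bool" where
  "S_converges S y l \<longleftrightarrow> (\<forall>\<epsilon>>0. \<exists>k. \<forall>n\<ge>k. S (y n) (y n) l < \<epsilon>)"

text \<open>Natural density: the positive integers are modelled as the naturals \<open>\<ge> 1\<close>;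
  \<open>has_natural_density B d\<close> means the limit exists and equals d.\<close>
definition has_natural_density :: "nat set \<Rightarrow> real \<Rightarrow> bool" where
  "has_natural_density B d \<longleftrightarrow>
     (\<lambda>n. real (card {k \<in> B. 1 \<le> k \<and> k \<le> n}) / real n) \<longlonglongrightarrow> d"

definition stat_converges :: "('a \<Rightarrow> 'a \<Rightarrow> 'a \<Rightarrow> real) \<Rightarrow> (nat \<Rightarrow> 'a) \<Rightarrow> 'a \<Rightarrow> bool" where
  "stat_converges S x l \<longleftrightarrow>
     (\<forall>\<epsilon>>0. has_natural_density {n. 1 \<le> n \<and> S (x n) (x n) l \<ge> \<epsilon>} 0)"

end

theory Submission
  imports Defs
begin

text \<open>The sets \<open>A j\<close> of indices with \<open>S (x n) (x n) l \<ge> 1 / (j + 1)\<close> increase with \<open>j\<close> and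
  have density zero. A diagonal choice \<open>J n \<rightarrow> \<infinity>\<close>, growing slowly enough that the counting
  ratio of \<open>A (J n)\<close> up to \<open>n\<close> still tends to zero, yields the density-zero set
  \<open>D = {n. n \<in> A (J n)}\<close>, which contains every \<open>A j\<close> up to finitely many indices.
  Replacing \<open>x n\<close> by \<open>l\<close> on \<open>D\<close> therefore gives an ordinarily convergent sequence.\<close>

lemma counting_ratio_mono:
  assumes "{k \<in> B. 1 \<le> k \<and> k \<le> n} \<subseteq> C"
  shows "real (card {k \<in> B. 1 \<le> k \<and> k \<le> n}) / real n
           \<le> real (card {k \<in> C. 1 \<le> k \<and> k \<le> n}) / real n"
proof -
  have "card {k \<in> B. 1 \<le> k \<and> k \<le> n} \<le> card {k \<in> C. 1 \<le> k \<and> k \<le> n}"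
    by (rule card_mono) (use assms in \<open>auto intro: finite_subset[of _ "{..n}"]\<close>)
  then show ?thesis
    by (simp add: divide_right_mono)
qed

lemma has_natural_density_zeroI:
  assumes "g \<longlonglongrightarrow> 0"
    and "eventually (\<lambda>n. real (card {k \<in> B. 1 \<le> k \<and> k \<le> n}) / real n \<le> g n) sequentially"
  shows "has_natural_density B 0"
  unfolding has_natural_density_def
  by (rule tendsto_sandwich[OF _ assms(2) tendsto_const assms(1)]) simp

lemma has_natural_density_zero_subset:
  assumes "has_natural_density C 0" and "B \<subseteq> C"
  shows "has_natural_density B 0"
proof (rule has_natural_density_zeroI)
  show "(\<lambda>n. real (card {k \<in> C. 1 \<le> k \<and> k \<le> n}) / real n) \<longlonglongrightarrow> 0"
    using assms(1) unfolding has_natural_density_def .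
  show "\<forall>\<^sub>F n in sequentially. real (card {k \<in> B. 1 \<le> k \<and> k \<le> n}) / real n
          \<le> real (card {k \<in> C. 1 \<le> k \<and> k \<le> n}) / real n"
    using assms(2) by (intro always_eventually allI counting_ratio_mono) blast
qed

lemma diagonal_tendsto_zero:
  fixes g :: "nat \<Rightarrow> nat \<Rightarrow> real"
  assumes "\<And>j. g j \<longlonglongrightarrow> 0"
  shows "\<exists>J. mono J \<and> filterlim J at_top sequentially \<and> (\<lambda>n. g (J n) n) \<longlonglongrightarrow> 0"
proof -
  have "\<exists>N. \<forall>n\<ge>N. \<bar>g j n\<bar> < 1 / real (Suc j)" for j
    using LIMSEQ_D[OF assms[of j], of "1 / real (Suc j)"] by simp
  then obtain N where N: "\<And>j n. N j \<le> n \<Longrightarrow> \<bar>g j n\<bar> < 1 / real (Suc j)"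
    by metis
  define M where "M j = j + (\<Sum>i\<le>j. N i)" for j
  have "mono M"
    unfolding M_def by (intro monoI add_mono sum_mono2) auto
  have N_le_M: "N j \<le> M j" for j
    unfolding M_def using member_le_sum[of j "{..j}" N] by simp
  define J where "J n = Max (insert 0 {j. M j \<le> n})" for n
    \<comment> \<open>the largest \<open>j\<close> with \<open>M j \<le> n\<close>; the \<open>0\<close> only matters for \<open>n < M 0\<close>\<close>
  have fin: "finite {j. M j \<le> n}" for n
    by (rule finite_subset[of _ "{..n}"]) (auto simp: M_def)
  have le_J: "j \<le> J n" if "M j \<le> n" for j n
    unfolding J_def using fin that by auto
  have M_J: "M (J n) \<le> n" if "M 0 \<le> n" for n
    using Max_in[of "insert 0 {j. M j \<le> n}"] fin that unfolding J_def by auto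
  have "mono J"
    unfolding J_def using fin by (intro monoI Max_mono) auto
  moreover have "filterlim J at_top sequentially"
    unfolding filterlim_at_top using le_J by (blast intro: eventually_sequentiallyI)
  moreover have "(\<lambda>n. g (J n) n) \<longlonglongrightarrow> 0"
  proof (rule LIMSEQ_I)
    fix e :: real
    assume "0 < e"
    then obtain j0 where j0: "1 / real (Suc j0) < e"
      by (rule nat_approx_posE)
    have "\<bar>g (J n) n\<bar> < e" if "M j0 \<le> n" for n
    proof -
      have "j0 \<le> J n"
        using le_J that .
      moreover have "N (J n) \<le> n"
        using M_J[of n] N_le_M[of "J n"] monoD[OF \<open>mono M\<close>, of 0 j0] that by simp
      then have "\<bar>g (J n) n\<bar> < 1 / real (Suc (J n))"
        by (rule N)
      moreover have "1 / real (Suc (J n)) \<le> 1 / real (Suc j0)"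
        using \<open>j0 \<le> J n\<close> by (simp add: frac_le)
      ultimately show ?thesis
        using j0 by linarith
    qed
    then show "\<exists>n0. \<forall>n\<ge>n0. norm (g (J n) n - 0) < e"
      by auto
  qed
  ultimately show ?thesis
    by blast
qed

lemma density_zero_almost_contains_incseq:
  assumes "incseq A" and "\<And>j. has_natural_density (A j) 0"
  shows "\<exists>D. has_natural_density D 0 \<and> (\<forall>j. finite (A j - D))"
proof -
  obtain J where "mono J" and J_top: "filterlim J at_top sequentially"
    and J_lim: "(\<lambda>n. real (card {k \<in> A (J n). 1 \<le> k \<and> k \<le> n}) / real n) \<longlonglongrightarrow> 0"
    using diagonal_tendsto_zero[of "\<lambda>j n. real (card {k \<in> A j. 1 \<le> k \<and> k \<le> n}) / real n"]
      assms(2) unfolding has_natural_density_def by blast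
  define D where "D = {n. n \<in> A (J n)}"
  have "{k \<in> D. 1 \<le> k \<and> k \<le> n} \<subseteq> A (J n)" for n
    using monoD[OF assms(1) monoD[OF \<open>mono J\<close>]] unfolding D_def by blast
  then have "has_natural_density D 0"
    by (intro has_natural_density_zeroI[OF J_lim] always_eventually allI counting_ratio_mono)
  moreover have "finite (A j - D)" for j
  proof -
    obtain n0 where n0: "\<And>n. n \<ge> n0 \<Longrightarrow> j \<le> J n"
      using J_top unfolding filterlim_at_top eventually_sequentially by blast
    have "A j - D \<subseteq> {..<n0}"
    proof
      fix n
      assume n: "n \<in> A j - D"
      show "n \<in> {..<n0}"
      proof (rule ccontr)
        assume "n \<notin> {..<n0}"
        then have "A j \<subseteq> A (J n)"
          using n0 monoD[OF assms(1)] by simp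
        then show False
          using n unfolding D_def by blast
      qed
    qed
    then show ?thesis
      by (rule finite_subset) simp
  qed
  ultimately show ?thesis
    by blast
qed

lemma S_converges_off_exceptional_set:
  assumes "S l l l = 0"
    and "\<And>j. finite ({n. 1 \<le> n \<and> 1 / real (Suc j) \<le> S (x n) (x n) l} - D)"
  shows "S_converges S (\<lambda>n. if n \<in> D then l else x n) l"
  unfolding S_converges_def
proof (intro allI impI)
  fix e :: real
  assume "0 < e"
  then obtain j where j: "1 / real (Suc j) < e"
    by (rule nat_approx_posE)
  obtain k where k: "\<And>n. n \<in> {n. 1 \<le> n \<and> 1 / real (Suc j) \<le> S (x n) (x n) l} - D \<Longrightarrow> n < k"
    using finite_nat_bounded[OF assms(2)[of j]] by auto
  have "S (if n \<in> D then l else x n) (if n \<in> D then l else x n) l < e" if "max k 1 \<le> n" for n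
  proof (cases "n \<in> D")
    case True
    then show ?thesis
      using assms(1) \<open>0 < e\<close> by simp
  next
    case False
    then have "S (x n) (x n) l < 1 / real (Suc j)"
      using k[of n] that by force
    then show ?thesis
      using False j by simp
  qed
  then show "\<exists>k. \<forall>n\<ge>k. S (if n \<in> D then l else x n) (if n \<in> D then l else x n) l < e"
    by blast
qed

theorem theorem3p4:
  fixes S :: "'a \<Rightarrow> 'a \<Rightarrow> 'a \<Rightarrow> real" and x :: "nat \<Rightarrow> 'a" and l :: 'a
  assumes "S_metric S"
    and "stat_converges S x l"
  shows "\<exists>y :: nat \<Rightarrow> 'a. (\<exists>m. S_converges S y m) \<and>
           has_natural_density {n. 1 \<le> n \<and> x n \<noteq> y n} 0"
proof -
  define A where "A j = {n. 1 \<le> n \<and> 1 / real (Suc j) \<le> S (x n) (x n) l}" for j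
  have "incseq A"
  proof (intro monoI subsetI)
    fix i j n
    assume "i \<le> j" and "n \<in> A i"
    moreover have "1 / real (Suc j) \<le> 1 / real (Suc i)"
      using \<open>i \<le> j\<close> by (simp add: frac_le)
    ultimately show "n \<in> A j"
      unfolding A_def by auto
  qed
  moreover have "has_natural_density (A j) 0" for j
    using assms(2) unfolding stat_converges_def A_def by simp
  ultimately obtain D where D: "has_natural_density D 0" and fin: "\<And>j. finite (A j - D)"
    by (metis density_zero_almost_contains_incseq)
  have "S l l l = 0"
    using assms(1) unfolding S_metric_def by blast
  then have "S_converges S (\<lambda>n. if n \<in> D then l else x n) l"
    by (rule S_converges_off_exceptional_set) (use fin in \<open>simp add: A_def\<close>)
  moreover have "has_natural_density {n. 1 \<le> n \<and> x n \<noteq> (if n \<in> D then l else x n)} 0"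
    by (rule has_natural_density_zero_subset[OF D]) auto
  ultimately show ?thesis
    by blast
qed

end
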